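(* Let $n>d\ge 2$ be integers. For every connected graph $G$ with $n$ vertices and diameter $d$, $$\sigma_2(G)\le \binom{n-d}{2}d^2+2(n-d-1)d^2+d^3.$$
   Context: All graphs are finite, simple, undirected. For a connected graph $G$ and $u\in V(G)$, the eccentricity $\varepsilon_G(u)=\max_{v\in V(G)} d_G(u,v)$, where $d_G$ is the shortest-path distance; the diameter is $\max_u\varepsilon_G(u)$. The second Zagreb eccentricity index is $\sigma_2(G)=\sum_{uv\in E(G)}\varepsilon_G(u)\varepsilon_G(v)$. *)

theory Defs
  imports Main
begin

definition simple_graph :: "'a set \<Rightarrow> 'a set set \<Rightarrow> bool" where
  "simple_graph V E \<longleftrightarrow> finite V \<and> (\<forall>e\<in>E. e \<subseteq> V \<and> card e = 2)"

inductive walk_of_length :: "'a set set \<Rightarrow> nat \<Rightarrow> 'a \<Rightarrow> 'a \<Rightarrow> bool" for E where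
  walk_nil: "walk_of_length E 0 u u"
| walk_cons: "{u, w} \<in> E \<Longrightarrow> walk_of_length E k w v \<Longrightarrow> walk_of_length E (Suc k) u v"

definition connected_graph :: "'a set \<Rightarrow> 'a set set \<Rightarrow> bool" where
  "connected_graph V E \<longleftrightarrow> V \<noteq> {} \<and> (\<forall>u\<in>V. \<forall>v\<in>V. \<exists>k. walk_of_length E k u v)"

text \<open>Shortest-path distance (meaningful in a connected graph).\<close>
definition dist :: "'a set set \<Rightarrow> 'a \<Rightarrow> 'a \<Rightarrow> nat" where
  "dist E u v = (LEAST k. walk_of_length E k u v)"

definition ecc :: "'a set \<Rightarrow> 'a set set \<Rightarrow> 'a \<Rightarrow> nat" where
  "ecc V E u = Max ((\<lambda>v. dist E u v) ` V)"

definition diameter :: "'a set \<Rightarrow> 'a set set \<Rightarrow> nat" where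
  "diameter V E = Max ((\<lambda>u. ecc V E u) ` V)"

definition sigma2 :: "'a set \<Rightarrow> 'a set set \<Rightarrow> nat" where
  "sigma2 V E = (\<Sum>e\<in>E. \<Prod>x\<in>e. ecc V E x)"

end

theory Submission
  imports Defs
begin

text \<open>Every edge contributes at most \<open>d\<^sup>2\<close> to \<open>\<sigma>\<^sub>2\<close>, so it suffices to bound the number of
  edges. Take a shortest path \<open>P\<close> between two vertices at distance \<open>d\<close>. Being a geodesic, \<open>P\<close>
  induces only its own \<open>d\<close> edges, and a vertex outside \<open>P\<close> has at most three neighbours on \<open>P\<close>:
  any two of them are at distance at most 2, so their positions along \<open>P\<close> differ by at most 2.
  Bounding the edges among the remaining
  \<open>n - d - 1\<close> vertices trivially gives \<open>|E| \<le> d + 3(n - d - 1) + C(n - d - 1, 2)\<close>.\<close>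

lemma walk_append:
  "walk_of_length E a x y \<Longrightarrow> walk_of_length E b y z \<Longrightarrow> walk_of_length E (a + b) x z"
  by (induction rule: walk_of_length.induct) (auto intro: walk_of_length.intros)

lemma walk_edge: "{x, y} \<in> E \<Longrightarrow> walk_of_length E 1 x y"
  by (metis One_nat_def walk_of_length.intros)

lemma walk_of_length_path:
  "walk_of_length E k u v \<Longrightarrow> \<exists>p. p 0 = u \<and> p k = v \<and> (\<forall>i<k. {p i, p (Suc i)} \<in> E)"
proof (induction rule: walk_of_length.induct)
  case (walk_nil u)
  then show ?case by (intro exI[of _ "\<lambda>_. u"]) auto
next
  case (walk_cons u w k v)
  then obtain p where p: "p 0 = w" "p k = v" "\<forall>i<k. {p i, p (Suc i)} \<in> E" by blast
  define q where "q i = (if i = 0 then u else p (i - 1))" for i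
  have "\<forall>i<Suc k. {q i, q (Suc i)} \<in> E"
  proof (intro allI impI)
    fix i assume "i < Suc k"
    then show "{q i, q (Suc i)} \<in> E"
      using p walk_cons(1) by (cases i) (auto simp: q_def)
  qed
  then show ?case using p by (intro exI[of _ q]) (auto simp: q_def)
qed

lemma path_walk_of_length:
  assumes "\<forall>i<k. {p i, p (Suc i)} \<in> E" and "i + m \<le> k"
  shows "walk_of_length E m (p i) (p (i + m))"
  using assms(2)
proof (induction m)
  case 0
  then show ?case by (simp add: walk_nil)
next
  case (Suc m)
  then have "walk_of_length E m (p i) (p (i + m))" by simp
  moreover have "walk_of_length E 1 (p (i + m)) (p (i + Suc m))"
    using assms(1) Suc.prems by (intro walk_edge) auto
  ultimately show ?case using walk_append[of E m _ _ 1] by simp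
qed

lemma dist_le_walk: "walk_of_length E k u v \<Longrightarrow> dist E u v \<le> k"
  unfolding dist_def by (rule Least_le)

lemma walk_of_length_dist: "walk_of_length E k u v \<Longrightarrow> walk_of_length E (dist E u v) u v"
  unfolding dist_def by (rule LeastI)

lemma dist_self: "dist E x x = 0"
  using dist_le_walk[OF walk_nil] by simp

lemma dist_edge: "{x, y} \<in> E \<Longrightarrow> dist E x y \<le> 1"
  by (metis dist_le_walk walk_edge)

lemma simple_graph_finite: "simple_graph V E \<Longrightarrow> finite V"
  unfolding simple_graph_def by blast

lemma simple_graph_edge_subset: "simple_graph V E \<Longrightarrow> e \<in> E \<Longrightarrow> e \<subseteq> V"
  unfolding simple_graph_def by blast

lemma simple_graph_edge_doubleton:
  assumes "simple_graph V E" "e \<in> E"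
  obtains x y where "e = {x, y}" "x \<noteq> y"
proof -
  have "card e = 2" using assms unfolding simple_graph_def by blast
  then show ?thesis using that unfolding card_2_iff by blast
qed

lemma connected_graph_walk_dist:
  assumes "connected_graph V E" "x \<in> V" "y \<in> V"
  shows "walk_of_length E (dist E x y) x y"
proof -
  obtain k where "walk_of_length E k x y"
    using assms unfolding connected_graph_def by blast
  then show ?thesis by (rule walk_of_length_dist)
qed

lemma connected_graph_dist_triangle:
  assumes "connected_graph V E" "x \<in> V" "y \<in> V" "z \<in> V"
  shows "dist E x z \<le> dist E x y + dist E y z"
  using dist_le_walk[OF walk_append[OF connected_graph_walk_dist[OF assms(1-3)]
        connected_graph_walk_dist[OF assms(1,3,4)]]] .

lemma ecc_le_diameter: "finite V \<Longrightarrow> x \<in> V \<Longrightarrow> ecc V E x \<le> diameter V E"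
  unfolding diameter_def by auto

definition shortest_path :: "'a set \<Rightarrow> 'a set set \<Rightarrow> (nat \<Rightarrow> 'a) \<Rightarrow> nat \<Rightarrow> bool" where
  "shortest_path V E p k \<longleftrightarrow>
    p 0 \<in> V \<and> (\<forall>i<k. {p i, p (Suc i)} \<in> E) \<and> dist E (p 0) (p k) = k"

lemma diametral_path:
  assumes "simple_graph V E" "connected_graph V E"
  obtains p where "shortest_path V E p (diameter V E)"
proof -
  have "finite V" "V \<noteq> {}"
    using assms simple_graph_finite unfolding connected_graph_def by blast+
  then have "diameter V E \<in> ecc V E ` V"
    using Max_in[of "ecc V E ` V"] unfolding diameter_def by simp
  then obtain u where u: "u \<in> V" "ecc V E u = diameter V E" by auto
  have "ecc V E u \<in> dist E u ` V"
    using Max_in[of "dist E u ` V"] \<open>finite V\<close> \<open>V \<noteq> {}\<close> unfolding ecc_def by simp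
  then obtain v where v: "v \<in> V" "dist E u v = diameter V E" using u(2) by auto
  show ?thesis
    using walk_of_length_path[OF connected_graph_walk_dist[OF assms(2) u(1) v(1)]] u v that
    unfolding shortest_path_def by auto
qed

lemma sigma2_le_card_edges:
  assumes "simple_graph V E"
  shows "sigma2 V E \<le> card E * diameter V E ^ 2"
  unfolding sigma2_def power2_eq_square
proof (rule sum_bounded_above[where K = "diameter V E * diameter V E", simplified])
  fix e assume "e \<in> E"
  then obtain x y where "e = {x, y}" "x \<noteq> y"
    by (rule simple_graph_edge_doubleton[OF assms])
  moreover have "x \<in> V" "y \<in> V"
    using simple_graph_edge_subset[OF assms \<open>e \<in> E\<close>] calculation(1) by auto
  ultimately show "(\<Prod>x\<in>e. ecc V E x) \<le> diameter V E * diameter V E"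
    using ecc_le_diameter[OF simple_graph_finite[OF assms]] by (simp add: mult_le_mono)
qed

lemma card_edges_within:
  assumes "simple_graph V E" "W \<subseteq> V"
  shows "card {e \<in> E. e \<subseteq> W} \<le> card W choose 2"
proof -
  have "finite W" using simple_graph_finite[OF assms(1)] assms(2) by (rule finite_subset[rotated])
  have "{e \<in> E. e \<subseteq> W} \<subseteq> {B. B \<subseteq> W \<and> card B = 2}"
    using assms(1) unfolding simple_graph_def by auto
  then have "card {e \<in> E. e \<subseteq> W} \<le> card {B. B \<subseteq> W \<and> card B = 2}"
    using \<open>finite W\<close> by (intro card_mono) simp_all
  then show ?thesis using n_subsets[OF \<open>finite W\<close>] by simp
qed

lemma card_edges_across:
  assumes "simple_graph V E" "W \<subseteq> V" "P \<subseteq> V" "W \<inter> P = {}"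
  shows "card {e \<in> E. e \<inter> W \<noteq> {} \<and> e \<inter> P \<noteq> {}} \<le> (\<Sum>x\<in>W. card {y \<in> P. {x, y} \<in> E})"
proof -
  have fin: "finite W" "finite P"
    using simple_graph_finite[OF assms(1)] assms(2,3) by (auto intro: finite_subset)
  have "{e \<in> E. e \<inter> W \<noteq> {} \<and> e \<inter> P \<noteq> {}} \<subseteq> (\<Union>x\<in>W. (\<lambda>y. {x, y}) ` {y \<in> P. {x, y} \<in> E})"
  proof
    fix e assume "e \<in> {e \<in> E. e \<inter> W \<noteq> {} \<and> e \<inter> P \<noteq> {}}"
    then obtain x y where e: "e \<in> E" "x \<in> e" "y \<in> e" "x \<in> W" "y \<in> P" by blast
    obtain a b where "e = {a, b}" using simple_graph_edge_doubleton[OF assms(1) e(1)] .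
    moreover have "x \<noteq> y" using assms(4) e(4,5) by blast
    ultimately have "e = {x, y}" using e(2,3) by auto
    with e show "e \<in> (\<Union>x\<in>W. (\<lambda>y. {x, y}) ` {y \<in> P. {x, y} \<in> E})"
      by blast
  qed
  then have "card {e \<in> E. e \<inter> W \<noteq> {} \<and> e \<inter> P \<noteq> {}}
      \<le> card (\<Union>x\<in>W. (\<lambda>y. {x, y}) ` {y \<in> P. {x, y} \<in> E})"
    using fin by (intro card_mono) auto
  also have "\<dots> \<le> (\<Sum>x\<in>W. card ((\<lambda>y. {x, y}) ` {y \<in> P. {x, y} \<in> E}))"
    using fin(1) by (rule card_UN_le)
  also have "\<dots> \<le> (\<Sum>x\<in>W. card {y \<in> P. {x, y} \<in> E})"
    by (intro sum_mono card_image_le) (simp add: fin(2))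
  finally show ?thesis .
qed

lemma shortest_path_vertex_in:
  assumes "simple_graph V E" "shortest_path V E p k" "i \<le> k"
  shows "p i \<in> V"
  using assms(3)
proof (induction i)
  case 0
  then show ?case using assms(2) unfolding shortest_path_def by blast
next
  case (Suc i)
  then have "{p i, p (Suc i)} \<in> E" using assms(2) unfolding shortest_path_def by simp
  then show ?case using simple_graph_edge_subset[OF assms(1)] by blast
qed

lemma shortest_path_dist:
  assumes "simple_graph V E" "connected_graph V E" "shortest_path V E p k" "i \<le> j" "j \<le> k"
  shows "dist E (p i) (p j) = j - i"
proof -
  have edges: "\<forall>i<k. {p i, p (Suc i)} \<in> E" and ends: "dist E (p 0) (p k) = k"
    using assms(3) unfolding shortest_path_def by blast+
  have walk: "walk_of_length E (b - a) (p a) (p b)" if "a \<le> b" "b \<le> k" for a b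
    using path_walk_of_length[OF edges, of a "b - a"] that by simp
  have "p 0 \<in> V" "p i \<in> V" "p j \<in> V" "p k \<in> V"
    using shortest_path_vertex_in[OF assms(1,3)] assms(4,5) by simp_all
  then have "dist E (p 0) (p k) \<le> dist E (p 0) (p i) + dist E (p i) (p k)"
    "dist E (p i) (p k) \<le> dist E (p i) (p j) + dist E (p j) (p k)"
    using connected_graph_dist_triangle[OF assms(2)] by simp_all
  moreover have "dist E (p 0) (p i) \<le> i" "dist E (p j) (p k) \<le> k - j"
    "dist E (p i) (p j) \<le> j - i"
    using dist_le_walk[OF walk[of 0 i]] dist_le_walk[OF walk[of j k]] dist_le_walk[OF walk[of i j]]
      assms(4,5) by simp_all
  ultimately show ?thesis using ends assms(4,5) by linarith
qed

lemma shortest_path_inj_on: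
  assumes "simple_graph V E" "connected_graph V E" "shortest_path V E p k"
  shows "inj_on p {0..k}"
proof (rule inj_onI)
  fix i j assume ij: "i \<in> {0..k}" "j \<in> {0..k}" "p i = p j"
  have "dist E (p i) (p j) = 0" "dist E (p j) (p i) = 0"
    unfolding ij(3) by (simp_all add: dist_self)
  show "i = j"
  proof (cases "i \<le> j")
    case True
    with ij(2) \<open>dist E (p i) (p j) = 0\<close> show ?thesis
      using shortest_path_dist[OF assms, of i j] by simp
  next
    case False
    with ij(1) \<open>dist E (p j) (p i) = 0\<close> show ?thesis
      using shortest_path_dist[OF assms, of j i] by simp
  qed
qed

lemma card_edges_within_shortest_path:
  assumes "simple_graph V E" "connected_graph V E" "shortest_path V E p k"
  shows "card {e \<in> E. e \<subseteq> p ` {0..k}} \<le> k"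
proof -
  have "{e \<in> E. e \<subseteq> p ` {0..k}} \<subseteq> (\<lambda>i. {p i, p (Suc i)}) ` {..<k}"
  proof
    fix e assume "e \<in> {e \<in> E. e \<subseteq> p ` {0..k}}"
    then have e: "e \<in> E" "e \<subseteq> p ` {0..k}" by simp_all
    obtain a b where ab: "e = {a, b}" "a \<noteq> b"
      using simple_graph_edge_doubleton[OF assms(1) e(1)] .
    then obtain i j where ij: "a = p i" "b = p j" "i \<le> k" "j \<le> k"
      using e(2) by auto
    with ab(2) have "i \<noteq> j" by blast
    have "dist E (p i) (p j) \<le> 1" "dist E (p j) (p i) \<le> 1"
      using dist_edge e(1) ab(1) ij(1,2) by (metis insert_commute)+
    then consider "j = Suc i" | "i = Suc j"
      using shortest_path_dist[OF assms, of i j] shortest_path_dist[OF assms, of j i] ij(3,4)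
        \<open>i \<noteq> j\<close> by linarith
    then show "e \<in> (\<lambda>i. {p i, p (Suc i)}) ` {..<k}"
    proof cases
      case 1
      then show ?thesis using ab(1) ij(1-4) by (intro rev_image_eqI[of i]) auto
    next
      case 2
      then show ?thesis using ab(1) ij(1-4) by (intro rev_image_eqI[of j]) (auto simp: insert_commute)
    qed
  qed
  then have "card {e \<in> E. e \<subseteq> p ` {0..k}} \<le> card ((\<lambda>i. {p i, p (Suc i)}) ` {..<k})"
    by (intro card_mono) auto
  also have "\<dots> \<le> k"
    using card_image_le[of "{..<k}"] by simp
  finally show ?thesis .
qed

lemma card_neighbours_on_shortest_path:
  assumes "simple_graph V E" "connected_graph V E" "shortest_path V E p k" "x \<in> V"
  shows "card {y \<in> p ` {0..k}. {x, y} \<in> E} \<le> 3"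
proof -
  define S where "S = {i \<in> {0..k}. {x, p i} \<in> E}"
  have "finite S" unfolding S_def by simp
  have "card S \<le> 3"
  proof (cases "S = {}")
    case False
    define m where "m = Min S"
    have m: "m \<in> S" "\<And>j. j \<in> S \<Longrightarrow> m \<le> j"
      using Min_in[OF \<open>finite S\<close> False] \<open>finite S\<close> unfolding m_def by auto
    have "S \<subseteq> {m..m + 2}"
    proof
      fix j assume j: "j \<in> S"
      have "dist E (p m) (p j) \<le> dist E (p m) x + dist E x (p j)"
        using connected_graph_dist_triangle[OF assms(2)] shortest_path_vertex_in[OF assms(1,3)]
          assms(4) m(1) j unfolding S_def by simp
      also have "\<dots> \<le> 2"
        using m(1) j dist_edge[of "p m" x E] dist_edge[of x "p j" E]
        unfolding S_def by (simp add: insert_commute)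
      finally show "j \<in> {m..m + 2}"
        using shortest_path_dist[OF assms(1-3), of m j] m(2)[OF j] j unfolding S_def by auto
    qed
    then show ?thesis using card_mono[of "{m..m + 2}" S] by simp
  qed simp
  moreover have "{y \<in> p ` {0..k}. {x, y} \<in> E} = p ` S"
    unfolding S_def by auto
  ultimately show ?thesis
    using card_image_le[OF \<open>finite S\<close>, of p] by simp
qed

lemma card_edges_le_shortest_path:
  assumes "simple_graph V E" "connected_graph V E" "shortest_path V E p k"
  shows "card E \<le> k + 3 * (card V - k - 1) + (card V - k - 1 choose 2)"
proof -
  define P where "P = p ` {0..k}"
  define W where "W = V - P"
  define E_path where "E_path = {e \<in> E. e \<subseteq> P}"
  define E_cross where "E_cross = {e \<in> E. e \<inter> W \<noteq> {} \<and> e \<inter> P \<noteq> {}}"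
  define E_rest where "E_rest = {e \<in> E. e \<subseteq> W}"
  have "P \<subseteq> V" "W \<subseteq> V"
    using shortest_path_vertex_in[OF assms(1,3)] unfolding P_def W_def by auto
  have card_W: "card W = card V - k - 1"
    using card_Diff_subset[OF finite_subset[OF \<open>P \<subseteq> V\<close> simple_graph_finite[OF assms(1)]]
        \<open>P \<subseteq> V\<close>]
      card_image[OF shortest_path_inj_on[OF assms]] unfolding W_def P_def by simp
  have E_split: "E = E_path \<union> E_cross \<union> E_rest"
    using simple_graph_edge_subset[OF assms(1)]
    unfolding E_path_def E_cross_def E_rest_def W_def by blast
  have "card E \<le> card E_path + card E_cross + card E_rest"
    using card_Un_le[of "E_path \<union> E_cross" E_rest] card_Un_le[of E_path E_cross]
    unfolding E_split[symmetric] by linarith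
  moreover have "card E_cross \<le> 3 * card W"
  proof -
    have "card E_cross \<le> (\<Sum>x\<in>W. card {y \<in> P. {x, y} \<in> E})"
      using card_edges_across[OF assms(1) \<open>W \<subseteq> V\<close> \<open>P \<subseteq> V\<close>]
      unfolding E_cross_def W_def by blast
    also have "\<dots> \<le> (\<Sum>x\<in>W. 3)"
      using card_neighbours_on_shortest_path[OF assms] \<open>W \<subseteq> V\<close>
      unfolding P_def by (intro sum_mono) auto
    finally show ?thesis by simp
  qed
  moreover have "card E_path \<le> k"
    using card_edges_within_shortest_path[OF assms] unfolding E_path_def P_def .
  moreover have "card E_rest \<le> card W choose 2"
    using card_edges_within[OF assms(1) \<open>W \<subseteq> V\<close>] unfolding E_rest_def .
  ultimately show ?thesis unfolding card_W[symmetric] by linarith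
qed

lemma edge_bound_times_square:
  fixes n d :: nat
  assumes "d < n"
  shows "(d + 3 * (n - d - 1) + (n - d - 1 choose 2)) * d^2
    = ((n - d) choose 2) * d^2 + 2 * (n - d - 1) * d^2 + d^3"
proof -
  obtain w where w: "n - d = Suc w" using assms by (metis Suc_diff_Suc)
  have "Suc w choose 2 = (w choose 2) + w"
    by (simp add: numeral_2_eq_2)
  then show ?thesis using w by (simp add: power2_eq_square power3_eq_cube algebra_simps)
qed

theorem theorem2p11:
  fixes V :: "'a set" and E :: "'a set set" and n d :: nat
  assumes "simple_graph V E" and "connected_graph V E"
    and "card V = n" and "diameter V E = d"
    and "2 \<le> d" and "d < n"
  shows "sigma2 V E \<le> ((n - d) choose 2) * d^2 + 2 * (n - d - 1) * d^2 + d^3"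
proof -
  obtain p where "shortest_path V E p d"
    using diametral_path[OF assms(1,2)] unfolding assms(4) .
  then have "card E \<le> d + 3 * (n - d - 1) + (n - d - 1 choose 2)"
    using card_edges_le_shortest_path[OF assms(1,2)] assms(3) by blast
  have "sigma2 V E \<le> card E * d^2"
    using sigma2_le_card_edges[OF assms(1)] assms(4) by simp
  also have "\<dots> \<le> (d + 3 * (n - d - 1) + (n - d - 1 choose 2)) * d^2"
    using \<open>card E \<le> _\<close> by simp
  also have "\<dots> = ((n - d) choose 2) * d^2 + 2 * (n - d - 1) * d^2 + d^3"
    using assms(6) by (rule edge_bound_times_square)
  finally show ?thesis .
qed

end
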